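(* Let $R$ be a binary relation on the nodes of a $\lambda$-graph. If $R^{\Downarrow}$ is homogeneous, then $R^{\#}=(R^{\Downarrow})^*$.
   Context: A $\lambda$-graph is a finite directed graph whose nodes are of four kinds: an application node $@(n_1,n_2)$ has exactly two children, its left child $n_1$ and its right child $n_2$; an abstraction node $\lambda(n)$ has exactly one child, its body $n$; a free variable node has no children; a bound variable node $\mathrm{var}(l)$ has exactly one outgoing binding edge, to an abstraction node $l$ (its binder). (It is moreover required to be acyclic when binding edges are ignored, and dominated.) Two nodes are homogeneous if both are application nodes, or both abstraction nodes, or both free variable nodes, or both bound variable nodes; a binary relation $R$ on nodes is homogeneous if it only relates homogeneous nodes. Rules: $(\swarrow)$: $@(n_1,n_2)\,R\,@(m_1,m_2)$ implies $n_1\,R\,m_1$; $(\searrow)$: $@(n_1,n_2)\,R\,@(m_1,m_2)$ implies $n_2\,R\,m_2$; $(\downarrow)$: $\lambda(n)\,R\,\lambda(m)$ implies $n\,R\,m$. $R$ is propagated if closed under $(\swarrow),(\downarrow),(\searrow)$. $R^*$ denotes the reflexive–symmetric–transitive closure of $R$; $R^{\Downarrow}$ (propagation) is the smallest propagated relation containing $R$; $R^{\#}$ (spreading) is the smallest propagated equivalence relation containing $R$. *)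

theory Defs
  imports Main
begin

text \<open>Node kinds: application with left/right child, abstraction with body,
free variable, bound variable with its binder (binding edge).\<close>
datatype 'n node = App 'n 'n | Abs 'n | FVar | BVar 'n

fun children :: "'n node \<Rightarrow> 'n set" where
  "children (App a b) = {a, b}"
| "children (Abs a) = {a}"
| "children FVar = {}"
| "children (BVar l) = {}"

definition child_edges :: "'n set \<Rightarrow> ('n \<Rightarrow> 'n node) \<Rightarrow> ('n \<times> 'n) set" where
  "child_edges V lab = {(x, y). x \<in> V \<and> y \<in> children (lab x)}"

definition is_root :: "'n set \<Rightarrow> ('n \<Rightarrow> 'n node) \<Rightarrow> 'n \<Rightarrow> bool" where
  "is_root V lab r \<longleftrightarrow> r \<in> V \<and> (\<nexists>x. (x, r) \<in> child_edges V lab)"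

definition is_path :: "'n set \<Rightarrow> ('n \<Rightarrow> 'n node) \<Rightarrow> 'n list \<Rightarrow> bool" where
  "is_path V lab p \<longleftrightarrow> p \<noteq> [] \<and> set p \<subseteq> V \<and>
     (\<forall>i. Suc i < length p \<longrightarrow> (p ! i, p ! Suc i) \<in> child_edges V lab)"

definition dominated :: "'n set \<Rightarrow> ('n \<Rightarrow> 'n node) \<Rightarrow> bool" where
  "dominated V lab \<longleftrightarrow> (\<forall>v\<in>V. \<forall>l. lab v = BVar l \<longrightarrow>
     (\<forall>p. is_path V lab p \<and> is_root V lab (hd p) \<and> last p = v \<longrightarrow> l \<in> set p))"

definition lambda_graph :: "'n set \<Rightarrow> ('n \<Rightarrow> 'n node) \<Rightarrow> bool" where
  "lambda_graph V lab \<longleftrightarrow> finite V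
     \<and> (\<forall>x\<in>V. children (lab x) \<subseteq> V)
     \<and> (\<forall>x\<in>V. \<forall>l. lab x = BVar l \<longrightarrow> l \<in> V \<and> (\<exists>b. lab l = Abs b))
     \<and> acyclic (child_edges V lab)
     \<and> dominated V lab"

fun homogeneous_nodes :: "'n node \<Rightarrow> 'n node \<Rightarrow> bool" where
  "homogeneous_nodes (App _ _) (App _ _) = True"
| "homogeneous_nodes (Abs _) (Abs _) = True"
| "homogeneous_nodes FVar FVar = True"
| "homogeneous_nodes (BVar _) (BVar _) = True"
| "homogeneous_nodes _ _ = False"

definition homogeneous :: "('n \<Rightarrow> 'n node) \<Rightarrow> ('n \<Rightarrow> 'n \<Rightarrow> bool) \<Rightarrow> bool" where
  "homogeneous lab R \<longleftrightarrow> (\<forall>x y. R x y \<longrightarrow> homogeneous_nodes (lab x) (lab y))"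

inductive propagation :: "('n \<Rightarrow> 'n node) \<Rightarrow> ('n \<Rightarrow> 'n \<Rightarrow> bool) \<Rightarrow> 'n \<Rightarrow> 'n \<Rightarrow> bool"
  for lab R where
  base: "R x y \<Longrightarrow> propagation lab R x y"
| left: "propagation lab R n m \<Longrightarrow> lab n = App n1 n2 \<Longrightarrow> lab m = App m1 m2 \<Longrightarrow>
           propagation lab R n1 m1"
| right: "propagation lab R n m \<Longrightarrow> lab n = App n1 n2 \<Longrightarrow> lab m = App m1 m2 \<Longrightarrow>
           propagation lab R n2 m2"
| down: "propagation lab R n m \<Longrightarrow> lab n = Abs n' \<Longrightarrow> lab m = Abs m' \<Longrightarrow>
           propagation lab R n' m'"

inductive eq_closure :: "'n set \<Rightarrow> ('n \<Rightarrow> 'n \<Rightarrow> bool) \<Rightarrow> 'n \<Rightarrow> 'n \<Rightarrow> bool"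
  for V R where
  base: "R x y \<Longrightarrow> eq_closure V R x y"
| refl: "x \<in> V \<Longrightarrow> eq_closure V R x x"
| sym: "eq_closure V R x y \<Longrightarrow> eq_closure V R y x"
| trans: "eq_closure V R x y \<Longrightarrow> eq_closure V R y z \<Longrightarrow> eq_closure V R x z"

inductive spreading :: "'n set \<Rightarrow> ('n \<Rightarrow> 'n node) \<Rightarrow> ('n \<Rightarrow> 'n \<Rightarrow> bool) \<Rightarrow> 'n \<Rightarrow> 'n \<Rightarrow> bool"
  for V lab R where
  base: "R x y \<Longrightarrow> spreading V lab R x y"
| refl: "x \<in> V \<Longrightarrow> spreading V lab R x x"
| sym: "spreading V lab R x y \<Longrightarrow> spreading V lab R y x"
| trans: "spreading V lab R x y \<Longrightarrow> spreading V lab R y z \<Longrightarrow> spreading V lab R x z"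
| left: "spreading V lab R n m \<Longrightarrow> lab n = App n1 n2 \<Longrightarrow> lab m = App m1 m2 \<Longrightarrow>
           spreading V lab R n1 m1"
| right: "spreading V lab R n m \<Longrightarrow> lab n = App n1 n2 \<Longrightarrow> lab m = App m1 m2 \<Longrightarrow>
           spreading V lab R n2 m2"
| down: "spreading V lab R n m \<Longrightarrow> lab n = Abs n' \<Longrightarrow> lab m = Abs m' \<Longrightarrow>
           spreading V lab R n' m'"

end

theory Submission
  imports Defs
begin

text \<open>If \<open>R\<^sup>\<Down>\<close> is homogeneous, its equivalence closure is again propagated: in a chain
  \<open>x R\<^sup>\<Down> y\<^sub>1 \<dots> y\<^sub>k R\<^sup>\<Down> z\<close> of two application (or abstraction) nodes, homogeneity forces
  every intermediate node to be of the same kind, so the rules can be applied link by link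
  and the results chained again. Hence \<open>(R\<^sup>\<Down>)\<^sup>*\<close> is a propagated equivalence relation
  containing \<open>R\<close>, which gives \<open>R\<^sup># \<subseteq> (R\<^sup>\<Down>)\<^sup>*\<close>; the converse inclusion is by minimality.\<close>

definition propagated :: "('n \<Rightarrow> 'n node) \<Rightarrow> ('n \<Rightarrow> 'n \<Rightarrow> bool) \<Rightarrow> bool" where
  "propagated lab P \<longleftrightarrow>
     (\<forall>n m n1 n2 m1 m2. P n m \<longrightarrow> lab n = App n1 n2 \<longrightarrow> lab m = App m1 m2 \<longrightarrow> P n1 m1 \<and> P n2 m2)
   \<and> (\<forall>n m n' m'. P n m \<longrightarrow> lab n = Abs n' \<longrightarrow> lab m = Abs m' \<longrightarrow> P n' m')"

lemma propagatedI:
  assumes "\<And>n m n1 n2 m1 m2. P n m \<Longrightarrow> lab n = App n1 n2 \<Longrightarrow> lab m = App m1 m2 \<Longrightarrow> P n1 m1 \<and> P n2 m2"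
    and "\<And>n m n' m'. P n m \<Longrightarrow> lab n = Abs n' \<Longrightarrow> lab m = Abs m' \<Longrightarrow> P n' m'"
  shows "propagated lab P"
  using assms unfolding propagated_def by blast

lemma propagated_AppD:
  "propagated lab P \<Longrightarrow> P n m \<Longrightarrow> lab n = App n1 n2 \<Longrightarrow> lab m = App m1 m2 \<Longrightarrow> P n1 m1 \<and> P n2 m2"
  unfolding propagated_def by blast

lemma propagated_AbsD:
  "propagated lab P \<Longrightarrow> P n m \<Longrightarrow> lab n = Abs n' \<Longrightarrow> lab m = Abs m' \<Longrightarrow> P n' m'"
  unfolding propagated_def by blast

lemma propagated_propagation: "propagated lab (propagation lab R)"
  by (blast intro: propagatedI propagation.left propagation.right propagation.down)

lemma homogeneous_nodes_refl: "homogeneous_nodes a a"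
  by (cases a) simp_all

lemma homogeneous_nodes_sym: "homogeneous_nodes a b \<Longrightarrow> homogeneous_nodes b a"
  by (cases a; cases b) simp_all

lemma homogeneous_nodes_trans:
  "homogeneous_nodes a b \<Longrightarrow> homogeneous_nodes b c \<Longrightarrow> homogeneous_nodes a c"
  by (cases a; cases b; cases c) simp_all

lemma homogeneous_nodes_App: "homogeneous_nodes (App n1 n2) b \<Longrightarrow> \<exists>m1 m2. b = App m1 m2"
  by (cases b) simp_all

lemma homogeneous_nodes_Abs: "homogeneous_nodes (Abs n) b \<Longrightarrow> \<exists>m. b = Abs m"
  by (cases b) simp_all

lemma homogeneous_eq_closure:
  assumes "homogeneous lab P"
  shows "homogeneous lab (eq_closure V P)"
proof -
  have "homogeneous_nodes (lab x) (lab y)" if "eq_closure V P x y" for x y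
    using that
    by induction
      (use assms in \<open>auto simp: homogeneous_def homogeneous_nodes_refl
          intro: homogeneous_nodes_sym homogeneous_nodes_trans\<close>)
  then show ?thesis
    unfolding homogeneous_def by blast
qed

lemma propagated_eq_closure:
  assumes hom: "homogeneous lab P" and propagated: "propagated lab P"
    and closed: "\<forall>x\<in>V. children (lab x) \<subseteq> V"
  shows "propagated lab (eq_closure V P)"
proof -
  let ?E = "eq_closure V P"
  have hom_E: "homogeneous_nodes (lab x) (lab y)" if "?E x y" for x y
    using homogeneous_eq_closure[OF hom] that unfolding homogeneous_def by blast
  have "(\<forall>n1 n2 m1 m2. lab x = App n1 n2 \<longrightarrow> lab y = App m1 m2 \<longrightarrow> ?E n1 m1 \<and> ?E n2 m2)
      \<and> (\<forall>n m. lab x = Abs n \<longrightarrow> lab y = Abs m \<longrightarrow> ?E n m)"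
    if "?E x y" for x y
    using that
  proof induction
    case (base x y)
    then show ?case
      using propagated_AppD[OF propagated] propagated_AbsD[OF propagated] by (blast intro: eq_closure.base)
  next
    case (refl x)
    then have "children (lab x) \<subseteq> V"
      using closed by blast
    then show ?case
      by (auto intro: eq_closure.refl)
  next
    case (sym x y)
    then show ?case
      by (blast intro: eq_closure.sym)
  next
    case (trans x y z)
    have xy: "homogeneous_nodes (lab x) (lab y)"
      using hom_E trans.hyps(1) .
    show ?case
    proof (intro conjI allI impI)
      fix n1 n2 m1 m2
      assume "lab x = App n1 n2" "lab z = App m1 m2"
      moreover obtain k1 k2 where "lab y = App k1 k2"
        using homogeneous_nodes_App xy \<open>lab x = App n1 n2\<close> by fastforce
      ultimately show "?E n1 m1" "?E n2 m2"
        using trans.IH by (blast intro: eq_closure.trans)+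
    next
      fix n m
      assume "lab x = Abs n" "lab z = Abs m"
      moreover obtain k where "lab y = Abs k"
        using homogeneous_nodes_Abs xy \<open>lab x = Abs n\<close> by fastforce
      ultimately show "?E n m"
        using trans.IH by (blast intro: eq_closure.trans)
    qed
  qed
  then show ?thesis
    by (blast intro: propagatedI)
qed

lemma spreading_le_propagated_equivalence:
  assumes "spreading V lab R x y" and "propagated lab E"
    and "\<And>x y. R x y \<Longrightarrow> E x y" and "\<And>x. x \<in> V \<Longrightarrow> E x x"
    and "symp E" and "transp E"
  shows "E x y"
  using assms(1)
proof induction
  case (left n m n1 n2 m1 m2)
  then show ?case using propagated_AppD[OF assms(2)] by blast
next
  case (right n m n1 n2 m1 m2)
  then show ?case using propagated_AppD[OF assms(2)] by blast
next
  case (down n m n' m')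
  then show ?case using propagated_AbsD[OF assms(2)] by blast
qed (use assms(3-6) in \<open>auto dest: sympD elim: transpE\<close>)

lemma propagation_le_spreading: "propagation lab R x y \<Longrightarrow> spreading V lab R x y"
  by (induction rule: propagation.induct) (auto intro: spreading.intros)

lemma eq_closure_propagation_le_spreading:
  "eq_closure V (propagation lab R) x y \<Longrightarrow> spreading V lab R x y"
  by (induction rule: eq_closure.induct) (auto intro: spreading.intros propagation_le_spreading)

theorem mainTheorem11:
  fixes V :: "'n set" and lab :: "'n \<Rightarrow> 'n node" and R :: "'n \<Rightarrow> 'n \<Rightarrow> bool"
  assumes "lambda_graph V lab"
    and "\<forall>x y. R x y \<longrightarrow> x \<in> V \<and> y \<in> V"
    and "homogeneous lab (propagation lab R)"
  shows "spreading V lab R = eq_closure V (propagation lab R)"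
proof (intro ext iffI)
  fix x y
  assume spreading: "spreading V lab R x y"
  have "propagated lab (eq_closure V (propagation lab R))"
    using propagated_eq_closure[OF assms(3) propagated_propagation] assms(1)
    unfolding lambda_graph_def by blast
  with spreading show "eq_closure V (propagation lab R) x y"
    by (rule spreading_le_propagated_equivalence)
      (auto intro: eq_closure.intros propagation.base sympI transpI)
next
  fix x y
  assume "eq_closure V (propagation lab R) x y"
  then show "spreading V lab R x y"
    by (rule eq_closure_propagation_le_spreading)
qed

end
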